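(* For every $r\ge1$ and $k\in\{0,1,2\}$, $\textsc{dof}(r,k,2)=\dim\mathcal{S}_r^-\Lambda^k(\square_2)$.
   Context: $\square_n:=[-1,1]^n$. For integers $a,b$ use the convention $\binom{a}{b}:=0$ if $b<0$ or $a<b$. Define \[ \textsc{dof}(r,k,n):=\sum_{d=k}^{\min\{n,\lfloor r/2\rfloor+k\}}2^{n-d}\binom{n}{d}\left(\binom{r-d+2k-1}{r-d+k-1}\binom{r-d+k-1}{d-k}+\binom{r-d+2k}{k}\binom{r-d+k-1}{d-k-1}\right). \] Form monomials: $x^\alpha dx_\sigma:=x_1^{\alpha_1}\cdots x_n^{\alpha_n}\,dx_{\sigma(1)}\wedge\cdots\wedge dx_{\sigma(k)}$ for $\alpha\in\mathbb{N}^n$ and $\sigma=\{\sigma(1)<\dots<\sigma(k)\}\subset\{1,\dots,n\}$. $\mathcal{H}_r\Lambda^k$ is the span of form monomials with $|\alpha|=r$, $|\sigma|=k$ ($0$ if $r<0$ or $k\notin\{0,\dots,n\}$); $\mathcal{P}_r\Lambda^k:=\bigoplus_{j=0}^r\mathcal{H}_j\Lambda^k$. $d$ is the exterior derivative; the Koszul operator is $\kappa(x^\alpha dx_\sigma)=\sum_{i=1}^k(-1)^{i+1}x^\alpha x_{\sigma(i)}\,dx_{\sigma(1)}\wedge\cdots\wedge\widehat{dx_{\sigma(i)}}\wedge\cdots\wedge dx_{\sigma(k)}$, extended linearly. $\mathrm{ldeg}(x^\alpha dx_\sigma):=\#\{i\notin\sigma:\alpha_i=1\}$; $\mathcal{H}_{r,l}\Lambda^k$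 is the span of monomials in $\mathcal{H}_r\Lambda^k$ with linear degree $\ge l$; $\mathcal{J}_r\Lambda^k:=\sum_{l\ge1}\kappa\mathcal{H}_{r+l-1,l}\Lambda^{k+1}$; $\mathcal{S}_r\Lambda^k:=\mathcal{P}_r\Lambda^k+\mathcal{J}_r\Lambda^k+d\mathcal{J}_{r+1}\Lambda^{k-1}$; and for $r\ge1$, $\mathcal{S}_r^-\Lambda^k:=\mathcal{S}_{r-1}\Lambda^k+\kappa\mathcal{S}_{r-1}\Lambda^{k+1}$, with spaces on $\square_n$ being restrictions of the spaces on $\mathbb{R}^n$. *)

theory Defs
  imports "HOL-Analysis.Analysis" "HOL-Library.Function_Algebras"
begin

definition fscale :: "real \<Rightarrow> ('a \<Rightarrow> real) \<Rightarrow> ('a \<Rightarrow> real)" where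
  "fscale c f = (\<lambda>x. c * f x)"

abbreviation fspan :: "('a \<Rightarrow> real) set \<Rightarrow> ('a \<Rightarrow> real) set" where
  "fspan \<equiv> module.span fscale"

abbreviation fdim :: "('a \<Rightarrow> real) set \<Rightarrow> nat" where
  "fdim \<equiv> vector_space.dim fscale"

text \<open>A polynomial form is represented by its coefficient function:
  the value at (alpha, sigma) is the coefficient of x^alpha dx_sigma, where sigma
  is a set of indices, the wedge being taken in increasing order.\<close>

type_synonym form = "(nat \<Rightarrow> nat) \<times> nat set \<Rightarrow> real"

definition mono :: "(nat \<Rightarrow> nat) \<Rightarrow> nat set \<Rightarrow> form" where
  "mono \<alpha> \<sigma> = (\<lambda>p. if p = (\<alpha>, \<sigma>) then 1 else 0)"

definition supp :: "form \<Rightarrow> ((nat \<Rightarrow> nat) \<times> nat set) set" where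
  "supp \<omega> = {p. \<omega> p \<noteq> 0}"

definition linext :: "((nat \<Rightarrow> nat) \<Rightarrow> nat set \<Rightarrow> form) \<Rightarrow> form \<Rightarrow> form" where
  "linext T \<omega> = (\<lambda>q. \<Sum>p\<in>supp \<omega>. \<omega> p * T (fst p) (snd p) q)"

definition psign :: "nat set \<Rightarrow> nat \<Rightarrow> real" where
  "psign \<sigma> j = (-1) ^ card {i\<in>\<sigma>. i < j}"

text \<open>Koszul operator on a monomial:
  kappa(x^a dx_s) = sum_i (-1)^(i+1) x^a x_{s(i)} dx_{s - s(i)}\<close>
definition kappa_mono :: "(nat \<Rightarrow> nat) \<Rightarrow> nat set \<Rightarrow> form" where
  "kappa_mono \<alpha> \<sigma> = (\<lambda>q. \<Sum>j\<in>\<sigma>. psign \<sigma> j * mono (\<alpha>(j := Suc (\<alpha> j))) (\<sigma> - {j}) q)"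

definition kappa :: "form \<Rightarrow> form" where
  "kappa = linext kappa_mono"

text \<open>exterior derivative on a monomial:
  d(x^a dx_s) = sum_j a_j x^(a - e_j) dx_j \<and> dx_s\<close>
definition d_mono :: "nat \<Rightarrow> (nat \<Rightarrow> nat) \<Rightarrow> nat set \<Rightarrow> form" where
  "d_mono n \<alpha> \<sigma> = (\<lambda>q. \<Sum>j\<in>{j. j < n \<and> j \<notin> \<sigma> \<and> 0 < \<alpha> j}.
      real (\<alpha> j) * psign \<sigma> j * mono (\<alpha>(j := \<alpha> j - 1)) (insert j \<sigma>) q)"

definition ext_d :: "nat \<Rightarrow> form \<Rightarrow> form" where
  "ext_d n = linext (d_mono n)"

definition ldeg :: "nat \<Rightarrow> (nat \<Rightarrow> nat) \<Rightarrow> nat set \<Rightarrow> nat" where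
  "ldeg n \<alpha> \<sigma> = card {i. i < n \<and> i \<notin> \<sigma> \<and> \<alpha> i = 1}"

text \<open>form monomials of R^n with |alpha| = r, |sigma| = k, linear degree >= l
  (k an integer: no monomials for k < 0 or k > n)\<close>
definition monosL :: "nat \<Rightarrow> nat \<Rightarrow> int \<Rightarrow> nat \<Rightarrow> form set" where
  "monosL n r k l = {mono \<alpha> \<sigma> | \<alpha> \<sigma>. (\<forall>i\<ge>n. \<alpha> i = 0) \<and> (\<Sum>i<n. \<alpha> i) = r
      \<and> \<sigma> \<subseteq> {..<n} \<and> int (card \<sigma>) = k \<and> ldeg n \<alpha> \<sigma> \<ge> l}"

definition HH :: "nat \<Rightarrow> nat \<Rightarrow> int \<Rightarrow> form set" where
  "HH n r k = fspan (monosL n r k 0)"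

definition HHl :: "nat \<Rightarrow> nat \<Rightarrow> nat \<Rightarrow> int \<Rightarrow> form set" where
  "HHl n r l k = fspan (monosL n r k l)"

definition PP :: "nat \<Rightarrow> nat \<Rightarrow> int \<Rightarrow> form set" where
  "PP n r k = fspan (\<Union>j\<in>{..r}. HH n j k)"

definition JJ :: "nat \<Rightarrow> nat \<Rightarrow> int \<Rightarrow> form set" where
  "JJ n r k = fspan (\<Union>l\<in>{l. 1 \<le> l}. kappa ` HHl n (r + l - 1) l (k + 1))"

definition SS :: "nat \<Rightarrow> nat \<Rightarrow> int \<Rightarrow> form set" where
  "SS n r k = fspan (PP n r k \<union> JJ n r k \<union> ext_d n ` JJ n (r + 1) (k - 1))"

text \<open>S^-_r Lambda^k, for r >= 1\<close>
definition SSminus :: "nat \<Rightarrow> nat \<Rightarrow> int \<Rightarrow> form set" where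
  "SSminus n r k = fspan (SS n (r - 1) k \<union> kappa ` SS n (r - 1) (k + 1))"

definition cube :: "nat \<Rightarrow> (nat \<Rightarrow> real) set" where
  "cube n = {x. (\<forall>i<n. -1 \<le> x i \<and> x i \<le> 1) \<and> (\<forall>i\<ge>n. x i = 0)}"

definition eval_form :: "nat \<Rightarrow> form \<Rightarrow> (nat \<Rightarrow> real) \<Rightarrow> nat set \<Rightarrow> real" where
  "eval_form n \<omega> x \<sigma> = (\<Sum>\<alpha>\<in>{\<alpha>. \<omega> (\<alpha>, \<sigma>) \<noteq> 0}. \<omega> (\<alpha>, \<sigma>) * (\<Prod>i<n. x i ^ \<alpha> i))"

definition restrict_cube :: "nat \<Rightarrow> form \<Rightarrow> (nat \<Rightarrow> real) \<times> nat set \<Rightarrow> real" where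
  "restrict_cube n \<omega> = (\<lambda>(x, \<sigma>). if x \<in> cube n then eval_form n \<omega> x \<sigma> else 0)"

definition bin :: "int \<Rightarrow> int \<Rightarrow> int" where
  "bin a b = (if b < 0 \<or> a < b then 0 else int (nat a choose nat b))"

definition dof :: "int \<Rightarrow> int \<Rightarrow> int \<Rightarrow> int" where
  "dof r k n = (\<Sum>d\<in>{k..min n (r div 2 + k)}. 2 ^ nat (n - d) * bin n d *
      (bin (r - d + 2*k - 1) (r - d + k - 1) * bin (r - d + k - 1) (d - k)
       + bin (r - d + 2*k) k * bin (r - d + k - 1) (d - k - 1)))"

end

theory Submission
  imports Defs
begin

text \<open>
  Write \<open>r = s + 1\<close>. In two variables a form monomial is \<open>x\<^sup>a y\<^sup>b dx\<^sub>\<sigma>\<close> with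
  \<open>\<sigma> \<subseteq> {0, 1}\<close>, and linear degree \<open>\<ge> 1\<close> forces \<open>\<sigma>\<close> to be a singleton and the
  complementary exponent to be 1. So every generator of \<open>S\<^sup>-\<^sub>r\<Lambda>\<^sup>k\<close> can be computed,
  and one finds explicit bases: for \<open>k = 2\<close> the monomials \<open>x\<^sup>a y\<^sup>b dx\<and>dy\<close> with
  \<open>a + b \<le> s\<close>; for \<open>k = 0\<close> the monomials of degree \<open>\<le> r\<close> together with \<open>x\<^sup>r y\<close> and
  \<open>x y\<^sup>r\<close>, which come from \<open>\<kappa> d \<kappa>\<close> because \<open>\<kappa> d\<close> multiplies a homogeneous function
  by its degree; for \<open>k = 1\<close> the monomial 1-forms of degree \<open>\<le> s\<close>, the Koszul images
  \<open>\<kappa>(x\<^sup>a y\<^sup>s\<^sup>-\<^sup>a dx\<and>dy)\<close> for \<open>0 < a < s\<close>, and the four monomials \<open>x\<^sup>r dy\<close>, \<open>y\<^sup>r dx\<close>,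
  \<open>x y\<^sup>s dy\<close>, \<open>x\<^sup>s y dx\<close>, which are recovered from \<open>d\<kappa>(x\<^sup>s y dx)\<close>, \<open>d\<kappa>(x y\<^sup>s dy)\<close>
  and the two outermost Koszul images.

  In each basis every element has a coefficient at which all other elements vanish, so the
  basis is linearly independent, and restriction to the square is injective on polynomial
  forms since a polynomial vanishing on \<open>[-1, 1]\<^sup>2\<close> is zero. Counting the bases gives
  \<open>dof(r, k, 2)\<close>.
\<close>

interpretation FV: vector_space "fscale :: real \<Rightarrow> ('a \<Rightarrow> real) \<Rightarrow> ('a \<Rightarrow> real)"
  by unfold_locales (auto simp: fscale_def fun_eq_iff algebra_simps)

lemma in_subspace_if_fscale:
  assumes "FV.subspace V" "c \<noteq> 0" "fscale c x \<in> V"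
  shows "x \<in> V"
  using FV.subspace_scale[OF assms(1,3), of "1 / c"] assms(2) by (simp add: fscale_def)

lemma sum_fun_apply: "(\<Sum>v\<in>t. f v) p = (\<Sum>v\<in>t. f v p)"
  by (induction t rule: infinite_finite_induct) auto

definition fin_supp :: "form \<Rightarrow> bool" where
  "fin_supp \<omega> \<longleftrightarrow> finite (supp \<omega>)"

lemma fin_supp_zero [simp]: "fin_supp 0"
  by (simp add: fin_supp_def supp_def)

lemma fin_supp_mono [simp]: "fin_supp (mono \<alpha> \<sigma>)"
  by (simp add: fin_supp_def supp_def mono_def)

lemma supp_mono: "supp (mono \<alpha> \<sigma>) = {(\<alpha>, \<sigma>)}"
  by (auto simp: supp_def mono_def)

lemma mono_apply: "mono \<alpha> \<sigma> p = (if p = (\<alpha>, \<sigma>) then 1 else 0)"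
  by (simp add: mono_def)

lemma mono_eq_iff [simp]: "mono \<alpha> \<sigma> = mono \<beta> \<tau> \<longleftrightarrow> \<alpha> = \<beta> \<and> \<sigma> = \<tau>"
  by (auto simp: fun_eq_iff mono_apply split: if_splits)

lemma fin_supp_add_scale: "fin_supp a \<Longrightarrow> fin_supp b \<Longrightarrow> fin_supp (fscale c a + b)"
  unfolding fin_supp_def
  by (rule finite_subset[of _ "supp a \<union> supp b"]) (auto simp: supp_def fscale_def)

lemma fin_supp_scale: "fin_supp a \<Longrightarrow> fin_supp (fscale c a)"
  using fin_supp_add_scale[of a 0 c] by simp

lemma fin_supp_diff: "fin_supp a \<Longrightarrow> fin_supp b \<Longrightarrow> fin_supp (a - b)"
  unfolding fin_supp_def by (rule finite_subset[of _ "supp a \<union> supp b"]) (auto simp: supp_def)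

lemma fin_supp_sum:
  assumes "\<And>j. j \<in> J \<Longrightarrow> fin_supp (f j)"
  shows "fin_supp (\<lambda>q. \<Sum>j\<in>J. c j * f j q)"
proof (cases "finite J")
  case True
  have "supp (\<lambda>q. \<Sum>j\<in>J. c j * f j q) \<subseteq> (\<Union>j\<in>J. supp (f j))"
  proof
    fix q assume "q \<in> supp (\<lambda>q. \<Sum>j\<in>J. c j * f j q)"
    then have "(\<Sum>j\<in>J. c j * f j q) \<noteq> 0" by (simp add: supp_def)
    then obtain j where "j \<in> J" "c j * f j q \<noteq> 0" by (meson sum.neutral)
    then show "q \<in> (\<Union>j\<in>J. supp (f j))" by (auto simp: supp_def)
  qed
  moreover have "finite (\<Union>j\<in>J. supp (f j))"
    using True assms by (auto simp: fin_supp_def)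
  ultimately show ?thesis
    unfolding fin_supp_def by (rule finite_subset)
next
  case False
  then show ?thesis by (simp add: fin_supp_def supp_def)
qed

lemma fin_supp_span: "x \<in> FV.span S \<Longrightarrow> (\<And>x. x \<in> S \<Longrightarrow> fin_supp x) \<Longrightarrow> fin_supp x"
  by (induction rule: FV.span_induct_alt) (auto intro: fin_supp_add_scale)

lemma linext_eq:
  assumes "finite F" "supp \<omega> \<subseteq> F"
  shows "linext T \<omega> = (\<lambda>q. \<Sum>p\<in>F. \<omega> p * T (fst p) (snd p) q)"
  unfolding linext_def
  by (rule ext, rule sum.mono_neutral_left) (use assms in \<open>auto simp: supp_def\<close>)

lemma linext_mono [simp]: "linext T (mono \<alpha> \<sigma>) = T \<alpha> \<sigma>"
  unfolding linext_def supp_mono by (simp add: mono_def)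

lemma fin_supp_linext: "(\<And>\<alpha> \<sigma>. fin_supp (T \<alpha> \<sigma>)) \<Longrightarrow> fin_supp (linext T \<omega>)"
  unfolding linext_def by (rule fin_supp_sum)

lemma fin_supp_kappa [simp]: "fin_supp (kappa \<omega>)"
  unfolding kappa_def kappa_mono_def
  by (intro fin_supp_linext fin_supp_sum fin_supp_mono)

lemma fin_supp_ext_d [simp]: "fin_supp (ext_d n \<omega>)"
  unfolding ext_d_def d_mono_def
  by (intro fin_supp_linext fin_supp_sum fin_supp_mono)

lemma kappa_mono [simp]: "kappa (mono \<alpha> \<sigma>) = kappa_mono \<alpha> \<sigma>"
  by (simp add: kappa_def)

lemma ext_d_mono [simp]: "ext_d n (mono \<alpha> \<sigma>) = d_mono n \<alpha> \<sigma>"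
  by (simp add: ext_d_def)

lemma independent_if_private_coefficients:
  assumes "\<And>e. e \<in> B \<Longrightarrow> \<exists>p. e p \<noteq> 0 \<and> (\<forall>f\<in>B. f \<noteq> e \<longrightarrow> f p = 0)"
  shows "FV.independent (B :: form set)"
  unfolding FV.independent_explicit_module
proof (intro allI impI)
  fix t u v assume t: "finite t" "t \<subseteq> B" "(\<Sum>v\<in>t. fscale (u v) v) = 0" "v \<in> t"
  obtain p where p: "v p \<noteq> 0" "\<forall>f\<in>B. f \<noteq> v \<longrightarrow> f p = 0" using assms t by blast
  have "0 = (\<Sum>w\<in>t. fscale (u w) w) p" using t(3) by simp
  also have "\<dots> = (\<Sum>w\<in>t. u w * w p)" by (simp add: sum_fun_apply fscale_def)
  also have "\<dots> = u v * v p + (\<Sum>w\<in>t - {v}. u w * w p)" by (rule sum.remove[OF t(1,4)])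
  also have "(\<Sum>w\<in>t - {v}. u w * w p) = 0"
    by (rule sum.neutral) (use p t in auto)
  finally show "u v = 0" using p by simp
qed

lemma independent_monos:
  assumes "\<And>e. e \<in> B \<Longrightarrow> \<exists>\<alpha> \<sigma>. e = mono \<alpha> \<sigma>"
  shows "FV.independent B"
proof (rule independent_if_private_coefficients)
  fix e assume "e \<in> B"
  then obtain \<alpha> \<sigma> where e: "e = mono \<alpha> \<sigma>" using assms by blast
  have "f (\<alpha>, \<sigma>) = 0" if "f \<in> B" "f \<noteq> e" for f
    using assms[OF that(1)] that(2) e by (auto simp: mono_apply)
  then show "\<exists>p. e p \<noteq> 0 \<and> (\<forall>f\<in>B. f \<noteq> e \<longrightarrow> f p = 0)"
    using e by (auto simp: mono_apply)
qed

text \<open>\<open>linext\<close> and \<open>eval_form\<close> sum over the support, which yields \<open>0\<close> when the support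
  is infinite; so \<open>\<kappa>\<close>, \<open>d\<close> and the restriction are additive only on finitely supported forms.\<close>

definition fin_linear :: "(form \<Rightarrow> 'b \<Rightarrow> real) \<Rightarrow> bool" where
  "fin_linear F \<longleftrightarrow>
    (\<forall>c a b. fin_supp a \<longrightarrow> fin_supp b \<longrightarrow> F (fscale c a + b) = fscale c (F a) + F b)"

lemma fin_linearD:
  "fin_linear F \<Longrightarrow> fin_supp a \<Longrightarrow> fin_supp b \<Longrightarrow> F (fscale c a + b) = fscale c (F a) + F b"
  unfolding fin_linear_def by blast

lemma fin_linear_zero: "fin_linear F \<Longrightarrow> F 0 = 0"
proof -
  assume "fin_linear F"
  then have "F (fscale 1 0 + 0) = fscale 1 (F 0) + F 0" using fin_linearD fin_supp_zero by blast
  moreover have "fscale 1 (0::form) + 0 = 0" by (simp add: fscale_def fun_eq_iff)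
  ultimately have "F 0 = F 0 + F 0" by (simp add: fscale_def)
  then show "F 0 = 0" by (simp add: fun_eq_iff)
qed

lemma fin_linear_add: "fin_linear F \<Longrightarrow> fin_supp a \<Longrightarrow> fin_supp b \<Longrightarrow> F (a + b) = F a + F b"
  using fin_linearD[of F a b 1] by (simp add: fscale_def)

lemma fin_linear_scale: "fin_linear F \<Longrightarrow> fin_supp a \<Longrightarrow> F (fscale c a) = fscale c (F a)"
  using fin_linearD[of F a 0 c] fin_linear_zero[of F] by simp

lemma fin_linear_id: "fin_linear (\<lambda>x. x)"
  by (simp add: fin_linear_def)

lemma fin_linear_comp:
  "fin_linear F \<Longrightarrow> fin_linear G \<Longrightarrow> (\<And>x. fin_supp (G x)) \<Longrightarrow> fin_linear (\<lambda>x. F (G x))"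
  unfolding fin_linear_def by (auto intro: fin_supp_scale)

lemma fin_linear_linext: "fin_linear (linext T)"
  unfolding fin_linear_def
proof (intro allI impI)
  fix c a b assume "fin_supp a" "fin_supp b"
  then have F: "finite (supp a \<union> supp b)" by (simp add: fin_supp_def)
  have S: "supp (fscale c a + b) \<subseteq> supp a \<union> supp b" by (auto simp: supp_def fscale_def)
  show "linext T (fscale c a + b) = fscale c (linext T a) + linext T b"
    unfolding linext_eq[OF F S] linext_eq[OF F Un_upper1] linext_eq[OF F Un_upper2]
    by (auto simp: fun_eq_iff algebra_simps sum.distrib sum_distrib_left fscale_def)
qed

lemma fin_linear_kappa: "fin_linear kappa"
  unfolding kappa_def by (rule fin_linear_linext)

lemma fin_linear_ext_d: "fin_linear (ext_d n)"
  unfolding ext_d_def by (rule fin_linear_linext)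

lemma fin_linear_span_image:
  assumes F: "fin_linear F" and S: "\<And>x. x \<in> S \<Longrightarrow> fin_supp x"
  shows "F ` FV.span S = FV.span (F ` S)"
proof
  show "F ` FV.span S \<subseteq> FV.span (F ` S)"
  proof
    fix y assume "y \<in> F ` FV.span S"
    then obtain x where "x \<in> FV.span S" "y = F x" by blast
    moreover have "fin_supp x \<and> F x \<in> FV.span (F ` S)" if "x \<in> FV.span S" for x
      using that
    proof (induction rule: FV.span_induct_alt)
      case base then show ?case using fin_linear_zero[OF F] FV.span_zero fin_supp_zero by metis
    next
      case (step c x y)
      then have "fin_supp x" using S by blast
      with step have "fin_supp (fscale c x + y) \<and> F (fscale c x + y) \<in> FV.span (F ` S)"
        by (simp add: fin_linearD[OF F] fin_supp_add_scale FV.span_add FV.span_scale FV.span_base)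
      then show ?case by (simp add: plus_fun_def)
    qed
    ultimately show "y \<in> FV.span (F ` S)" by blast
  qed
  show "FV.span (F ` S) \<subseteq> F ` FV.span S"
  proof
    fix y assume "y \<in> FV.span (F ` S)"
    then show "y \<in> F ` FV.span S"
    proof (induction rule: FV.span_induct_alt)
      case base then show ?case using fin_linear_zero[OF F] FV.span_zero by (metis imageI)
    next
      case (step c x y)
      then obtain b w where "b \<in> S" "x = F b" "w \<in> FV.span S" "y = F w" by blast
      moreover from this have "fscale c x + y = F (fscale c b + w)"
        using S fin_supp_span by (simp add: fin_linearD[OF F])
      moreover have "fscale c b + w \<in> FV.span S"
        using calculation by (meson FV.span_add FV.span_scale FV.span_base)
      ultimately show ?case by blast
    qed
  qed
qed

lemma fin_linear_image_span_subset:
  assumes "fin_linear F" "\<And>x. x \<in> S \<Longrightarrow> fin_supp x" "F ` S \<subseteq> FV.span Y"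
  shows "F ` FV.span S \<subseteq> FV.span Y"
  using assms by (simp add: fin_linear_span_image FV.span_minimal)

lemma fin_linear_sum:
  assumes F: "fin_linear F" and "finite t" "\<And>w. w \<in> t \<Longrightarrow> fin_supp w"
  shows "F (\<Sum>w\<in>t. fscale (g w) w) = (\<Sum>w\<in>t. fscale (g w) (F w))"
  using assms(2,3)
proof (induction t rule: finite_induct)
  case empty
  then show ?case by (simp only: sum.empty fin_linear_zero[OF F])
next
  case (insert x t)
  have "fin_supp (\<Sum>w\<in>t. fscale (g w) w)"
    by (rule fin_supp_span[of _ t]) (use insert in \<open>auto intro: FV.span_sum FV.span_scale FV.span_base\<close>)
  then show ?case
    using insert by (simp only: sum.insert fin_linearD[OF F] insert_iff simp_thms)
qed

lemma fin_linear_inj_on: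
  assumes F: "fin_linear F" and B: "\<And>x. x \<in> B \<Longrightarrow> fin_supp x"
    and ker: "\<And>x. x \<in> FV.span B \<Longrightarrow> F x = 0 \<Longrightarrow> x = 0"
  shows "inj_on F B"
proof (rule inj_onI)
  fix e f assume ef: "e \<in> B" "f \<in> B" "F e = F f"
  then have "F (fscale (-1) f + e) = fscale (-1) (F f) + F e"
    using B by (intro fin_linearD[OF F]) auto
  also have "\<dots> = 0" using ef by (simp add: fun_eq_iff fscale_def)
  finally have "F (fscale (-1) f + e) = 0" .
  moreover have "fscale (-1) f + e \<in> FV.span B"
    using ef by (meson FV.span_add FV.span_scale FV.span_base)
  ultimately have "fscale (-1) f + e = 0" using ker by blast
  then show "e = f" by (simp add: fun_eq_iff fscale_def)
qed

lemma fin_linear_independent_image: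
  assumes F: "fin_linear F" and B: "finite B" "FV.independent B" "\<And>x. x \<in> B \<Longrightarrow> fin_supp x"
    and ker: "\<And>x. x \<in> FV.span B \<Longrightarrow> F x = 0 \<Longrightarrow> x = 0"
  shows "FV.independent (F ` B)"
  unfolding FV.independent_explicit_module
proof (intro allI impI)
  fix t u v assume t: "finite t" "t \<subseteq> F ` B" "(\<Sum>v\<in>t. fscale (u v) v) = 0" "v \<in> t"
  define t' where "t' = B \<inter> F -` t"
  have t': "t' \<subseteq> B" "F ` t' = t" "finite t'"
    using t(2) B(1) by (auto simp: t'_def intro: finite_subset)
  have inj: "inj_on F t'"
    using fin_linear_inj_on[OF F B(3) ker] t'(1) by (rule inj_on_subset)
  have "F (\<Sum>w\<in>t'. fscale (u (F w)) w) = (\<Sum>w\<in>t'. fscale (u (F w)) (F w))"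
    using t' B(3) by (intro fin_linear_sum[OF F]) auto
  also have "\<dots> = (\<Sum>v\<in>t. fscale (u v) v)"
    unfolding t'(2)[symmetric] by (simp add: sum.reindex[OF inj])
  finally have "F (\<Sum>w\<in>t'. fscale (u (F w)) w) = (\<Sum>v\<in>t. fscale (u v) v)" .
  moreover have "(\<Sum>w\<in>t'. fscale (u (F w)) w) \<in> FV.span B"
    using t'(1) by (auto intro: FV.span_sum FV.span_scale FV.span_base)
  ultimately have "(\<Sum>w\<in>t'. fscale (u (F w)) w) = 0" using t(3) ker by simp
  then have "u (F w) = 0" if "w \<in> t'" for w
    using FV.independentD[OF B(2) t'(3,1) _ that, of "\<lambda>w. u (F w)"] by blast
  then show "u v = 0" using t(4) t'(2) by auto
qed

lemma fdim_image_span_eq_card: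
  assumes F: "fin_linear F" and B: "finite B" "FV.independent B" "\<And>x. x \<in> B \<Longrightarrow> fin_supp x"
    and ker: "\<And>x. x \<in> FV.span B \<Longrightarrow> F x = 0 \<Longrightarrow> x = 0"
  shows "fdim (F ` FV.span B) = card B"
proof -
  have "fdim (F ` FV.span B) = fdim (F ` B)"
    by (simp only: fin_linear_span_image[OF F B(3)] FV.dim_span)
  also have "\<dots> = card (F ` B)"
    by (rule FV.dim_eq_card_independent[OF fin_linear_independent_image[OF assms]])
  also have "\<dots> = card B" by (rule card_image[OF fin_linear_inj_on[OF F B(3) ker]])
  finally show ?thesis .
qed

lemma fin_supp_monosL: "m \<in> monosL n r k l \<Longrightarrow> fin_supp m"
  unfolding monosL_def by auto

lemma fin_supp_HH: "x \<in> HH n r k \<Longrightarrow> fin_supp x"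
  unfolding HH_def by (erule fin_supp_span) (rule fin_supp_monosL)

lemma fin_supp_PP: "x \<in> PP n r k \<Longrightarrow> fin_supp x"
  unfolding PP_def by (erule fin_supp_span) (auto intro: fin_supp_HH)

lemma fin_supp_JJ: "x \<in> JJ n r k \<Longrightarrow> fin_supp x"
  unfolding JJ_def by (erule fin_supp_span) auto

lemma monosL_in_PP: "j \<le> s \<Longrightarrow> m \<in> monosL n j k 0 \<Longrightarrow> m \<in> PP n s k"
  unfolding PP_def HH_def by (intro FV.span_base UN_I[of j]) (auto intro: FV.span_base)

lemma kappa_monosL_in_JJ:
  "1 \<le> l \<Longrightarrow> m \<in> monosL n (s + l - 1) (k + 1) l \<Longrightarrow> kappa m \<in> JJ n s k"
  unfolding JJ_def HHl_def by (intro FV.span_base UN_I[of l]) (auto intro: FV.span_base)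

lemma SS_subset_SSminus: "SS n s k \<subseteq> SSminus n (Suc s) k"
  unfolding SSminus_def by (auto intro: FV.span_base)

lemma kappa_SS_in_SSminus: "x \<in> SS n s (k + 1) \<Longrightarrow> kappa x \<in> SSminus n (Suc s) k"
  unfolding SSminus_def by (auto intro: FV.span_base)

lemma monosL_in_SSminus: "j \<le> s \<Longrightarrow> m \<in> monosL n j k 0 \<Longrightarrow> m \<in> SSminus n (Suc s) k"
  using monosL_in_PP SS_subset_SSminus unfolding SS_def by (blast intro: FV.span_base)

lemma kappa_monosL_in_SSminus:
  "j \<le> s \<Longrightarrow> m \<in> monosL n j (k + 1) 0 \<Longrightarrow> kappa m \<in> SSminus n (Suc s) k"
  using monosL_in_PP kappa_SS_in_SSminus unfolding SS_def by (blast intro: FV.span_base)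

lemma ext_d_kappa_in_SS:
  assumes "1 \<le> l" "m \<in> monosL n (s + l) k l"
  shows "ext_d n (kappa m) \<in> SS n s k"
proof -
  have "kappa m \<in> JJ n (s + 1) (k - 1)"
    using assms by (intro kappa_monosL_in_JJ[of l]) simp_all
  then show ?thesis unfolding SS_def by (blast intro: FV.span_base)
qed

lemma ext_d_kappa_monosL_in_SSminus:
  "1 \<le> l \<Longrightarrow> m \<in> monosL n (s + l) k l \<Longrightarrow> ext_d n (kappa m) \<in> SSminus n (Suc s) k"
  using ext_d_kappa_in_SS SS_subset_SSminus by blast

lemma kappa_ext_d_kappa_monosL_in_SSminus:
  "1 \<le> l \<Longrightarrow> m \<in> monosL n (s + l) (k + 1) l \<Longrightarrow>
    kappa (ext_d n (kappa m)) \<in> SSminus n (Suc s) k"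
  using ext_d_kappa_in_SS kappa_SS_in_SSminus by blast

lemma image_PP_subset_span:
  assumes "fin_linear G" "\<And>j. j \<le> s \<Longrightarrow> G ` monosL n j k 0 \<subseteq> FV.span Y"
  shows "G ` PP n s k \<subseteq> FV.span Y"
  unfolding PP_def
proof (rule fin_linear_image_span_subset[OF assms(1)])
  show "G ` (\<Union>j\<in>{..s}. HH n j k) \<subseteq> FV.span Y"
    unfolding HH_def image_UN
    by (intro UN_least fin_linear_image_span_subset[OF assms(1)] assms(2))
      (auto intro: fin_supp_monosL)
qed (auto intro: fin_supp_HH)

lemma image_JJ_subset_span:
  assumes "fin_linear G"
    and "\<And>l. 1 \<le> l \<Longrightarrow> (\<lambda>m. G (kappa m)) ` monosL n (s + l - 1) (k + 1) l \<subseteq> FV.span Y"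
  shows "G ` JJ n s k \<subseteq> FV.span Y"
  unfolding JJ_def
proof (rule fin_linear_image_span_subset[OF assms(1)])
  have "(\<lambda>m. G (kappa m)) ` HHl n (s + l - 1) l (k + 1) \<subseteq> FV.span Y" if "1 \<le> l" for l
    unfolding HHl_def
    by (rule fin_linear_image_span_subset[OF fin_linear_comp[OF assms(1) fin_linear_kappa]])
      (use assms(2)[OF that] in \<open>auto intro: fin_supp_monosL\<close>)
  then show "G ` (\<Union>l\<in>{l. 1 \<le> l}. kappa ` HHl n (s + l - 1) l (k + 1)) \<subseteq> FV.span Y"
    by (auto simp: image_image image_subset_iff)
qed auto

lemma image_SS_subset_span:
  assumes G: "fin_linear G"
    and "\<And>j. j \<le> s \<Longrightarrow> G ` monosL n j k 0 \<subseteq> FV.span Y"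
    and "\<And>l. 1 \<le> l \<Longrightarrow> (\<lambda>m. G (kappa m)) ` monosL n (s + l - 1) (k + 1) l \<subseteq> FV.span Y"
    and "\<And>l. 1 \<le> l \<Longrightarrow> (\<lambda>m. G (ext_d n (kappa m))) ` monosL n (s + l) k l \<subseteq> FV.span Y"
  shows "G ` SS n s k \<subseteq> FV.span Y"
  unfolding SS_def
proof (rule fin_linear_image_span_subset[OF G])
  have "G ` PP n s k \<subseteq> FV.span Y" "G ` JJ n s k \<subseteq> FV.span Y"
    using assms by (simp_all add: image_PP_subset_span image_JJ_subset_span)
  moreover have "(\<lambda>x. G (ext_d n x)) ` JJ n (s + 1) (k - 1) \<subseteq> FV.span Y"
    using assms(4) fin_linear_comp[OF G fin_linear_ext_d fin_supp_ext_d]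
    by (intro image_JJ_subset_span) auto
  ultimately show "G ` (PP n s k \<union> JJ n s k \<union> ext_d n ` JJ n (s + 1) (k - 1)) \<subseteq> FV.span Y"
    by (auto simp: image_Un image_image)
qed (auto intro: fin_supp_PP fin_supp_JJ)

text \<open>The six hypotheses cover the generators of \<open>S\<^sub>s\<Lambda>\<^sup>k\<close> (monomials of degree \<open>\<le> s\<close>,
  \<open>\<kappa>\<close> and \<open>d\<kappa>\<close> of monomials of linear degree \<open>l \<ge> 1\<close>) and their Koszul images.\<close>

lemma SSminus_subset_span:
  assumes "\<And>j. j \<le> s \<Longrightarrow> monosL n j k 0 \<subseteq> FV.span Y"
    and "\<And>l. 1 \<le> l \<Longrightarrow> kappa ` monosL n (s + l - 1) (k + 1) l \<subseteq> FV.span Y"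
    and "\<And>l. 1 \<le> l \<Longrightarrow> (\<lambda>m. ext_d n (kappa m)) ` monosL n (s + l) k l \<subseteq> FV.span Y"
    and "\<And>j. j \<le> s \<Longrightarrow> kappa ` monosL n j (k + 1) 0 \<subseteq> FV.span Y"
    and "\<And>l. 1 \<le> l \<Longrightarrow> (\<lambda>m. kappa (kappa m)) ` monosL n (s + l - 1) (k + 2) l \<subseteq> FV.span Y"
    and "\<And>l. 1 \<le> l \<Longrightarrow>
      (\<lambda>m. kappa (ext_d n (kappa m))) ` monosL n (s + l) (k + 1) l \<subseteq> FV.span Y"
  shows "SSminus n (Suc s) k \<subseteq> FV.span Y"
proof -
  have "(\<lambda>x. x) ` SS n s k \<subseteq> FV.span Y"
    using assms(1-3) by (intro image_SS_subset_span fin_linear_id) auto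
  moreover have "kappa ` SS n s (k + 1) \<subseteq> FV.span Y"
    using assms(4-6) by (intro image_SS_subset_span fin_linear_kappa) (auto simp: add.assoc)
  ultimately show ?thesis
    unfolding SSminus_def by (intro FV.span_minimal) auto
qed

section \<open>Forms in two variables\<close>

definition vec2 :: "'a \<Rightarrow> 'a \<Rightarrow> nat \<Rightarrow> 'a::zero" where
  "vec2 a b = (\<lambda>i. if i = 0 then a else if i = 1 then b else 0)"

lemma vec2_simps [simp]: "vec2 a b 0 = a" "vec2 a b 1 = b" "vec2 a b (Suc 0) = b"
  by (simp_all add: vec2_def)

lemma vec2_eq_iff [simp]: "vec2 a b = vec2 c d \<longleftrightarrow> a = c \<and> b = d"
  by (metis vec2_simps(1,2))

lemma vec2_upd [simp]:
  "(vec2 a b)(0 := c) = vec2 c b" "(vec2 a b)(1 := c) = vec2 a c" "(vec2 a b)(Suc 0 := c) = vec2 a c"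
  by (auto simp: vec2_def fun_eq_iff)

lemma vec2_eta: "(\<forall>i\<ge>2. \<alpha> i = 0) \<Longrightarrow> \<alpha> = vec2 (\<alpha> 0) (\<alpha> 1)"
  by (auto simp: vec2_def fun_eq_iff)

definition in_two_vars :: "form \<Rightarrow> bool" where
  "in_two_vars \<omega> \<longleftrightarrow> (\<forall>p\<in>supp \<omega>. \<forall>i\<ge>2. fst p i = 0)"

lemma in_two_vars_mono [simp]: "in_two_vars (mono (vec2 a b) \<sigma>)"
  by (simp add: in_two_vars_def supp_mono vec2_def)

lemma in_two_vars_diff:
  assumes "in_two_vars a" "in_two_vars b"
  shows "in_two_vars (a - b)"
proof -
  have "supp (a - b) \<subseteq> supp a \<union> supp b" by (auto simp: supp_def)
  then show ?thesis using assms unfolding in_two_vars_def by blast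
qed

lemma in_two_vars_span: "x \<in> FV.span S \<Longrightarrow> (\<And>x. x \<in> S \<Longrightarrow> in_two_vars x) \<Longrightarrow> in_two_vars x"
proof (induction rule: FV.span_induct_alt)
  case (step c x y)
  then show ?case
    unfolding in_two_vars_def supp_def by (auto simp: fscale_def) (metis add.left_neutral mult_zero_right)
qed (simp add: in_two_vars_def supp_def)

lemma subset_lessThan_2: "\<sigma> \<subseteq> {..<2::nat} \<Longrightarrow> \<sigma> = {} \<or> \<sigma> = {0} \<or> \<sigma> = {1} \<or> \<sigma> = {0, 1}"
proof -
  assume "\<sigma> \<subseteq> {..<2}"
  then have "\<sigma> \<in> Pow {0, 1}" by (auto simp: numeral_2_eq_2)
  then show ?thesis by (auto simp: Pow_insert)
qed

lemma ldeg2_simps: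
  "ldeg 2 \<alpha> {0} = (if \<alpha> 1 = 1 then 1 else 0)"
  "ldeg 2 \<alpha> {1} = (if \<alpha> 0 = 1 then 1 else 0)"
  "ldeg 2 \<alpha> {0, 1} = 0"
  "ldeg 2 \<alpha> {Suc 0} = (if \<alpha> 0 = 1 then 1 else 0)"
proof -
  have "{i. i < 2 \<and> i \<notin> {0} \<and> \<alpha> i = 1} = (if \<alpha> 1 = 1 then {1} else {})"
    "{i. i < 2 \<and> i \<notin> {1} \<and> \<alpha> i = 1} = (if \<alpha> 0 = 1 then {0} else {})"
    "{i. i < 2 \<and> i \<notin> {0, 1} \<and> \<alpha> i = 1} = {}"
    by (auto simp: numeral_2_eq_2 less_Suc_eq) (metis neq0_conv)
  then show "ldeg 2 \<alpha> {0} = (if \<alpha> 1 = 1 then 1 else 0)"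
    "ldeg 2 \<alpha> {1} = (if \<alpha> 0 = 1 then 1 else 0)" "ldeg 2 \<alpha> {0, 1} = 0"
    "ldeg 2 \<alpha> {Suc 0} = (if \<alpha> 0 = 1 then 1 else 0)"
    unfolding ldeg_def by simp_all
qed

lemma monosL2_intro:
  assumes "\<sigma> \<subseteq> {..<2}" "a + b = j" "int (card \<sigma>) = k" "l \<le> ldeg 2 (vec2 a b) \<sigma>"
  shows "mono (vec2 a b) \<sigma> \<in> monosL 2 j k l"
  unfolding monosL_def using assms by (auto simp: vec2_def numeral_2_eq_2 intro!: exI[of _ "vec2 a b"])

lemma monosL2_elim:
  assumes "m \<in> monosL 2 j k l"
  obtains a b \<sigma> where "m = mono (vec2 a b) \<sigma>" "a + b = j"
    "\<sigma> = {} \<or> \<sigma> = {0} \<or> \<sigma> = {1} \<or> \<sigma> = {0, 1}" "int (card \<sigma>) = k" "l \<le> ldeg 2 (vec2 a b) \<sigma>"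
proof -
  from assms obtain \<alpha> \<sigma> where h: "m = mono \<alpha> \<sigma>" "\<forall>i\<ge>2. \<alpha> i = 0" "(\<Sum>i<2. \<alpha> i) = j"
    "\<sigma> \<subseteq> {..<2}" "int (card \<sigma>) = k" "ldeg 2 \<alpha> \<sigma> \<ge> l"
    unfolding monosL_def by blast
  have "\<alpha> = vec2 (\<alpha> 0) (\<alpha> 1)" using h(2) by (rule vec2_eta)
  with h subset_lessThan_2[OF h(4)] show ?thesis
    by (intro that[of "\<alpha> 0" "\<alpha> 1" \<sigma>]) (simp_all add: numeral_2_eq_2)
qed

lemma monosL2_cases:
  assumes "m \<in> monosL 2 j k l"
  obtains (zero) a b where "k = 0" "a + b = j" "m = mono (vec2 a b) {}"
  | (dx) a b where "k = 1" "a + b = j" "m = mono (vec2 a b) {0}" "l \<le> (if b = 1 then 1 else 0)"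
  | (dy) a b where "k = 1" "a + b = j" "m = mono (vec2 a b) {1}" "l \<le> (if a = 1 then 1 else 0)"
  | (dxdy) a b where "k = 2" "l = 0" "a + b = j" "m = mono (vec2 a b) {0, 1}"
proof -
  obtain a b \<sigma> where m: "m = mono (vec2 a b) \<sigma>" "a + b = j"
    and \<sigma>: "\<sigma> = {} \<or> \<sigma> = {0} \<or> \<sigma> = {1} \<or> \<sigma> = {0, 1}"
    and k: "int (card \<sigma>) = k" and l: "l \<le> ldeg 2 (vec2 a b) \<sigma>"
    using monosL2_elim[OF assms] by blast
  from \<sigma> show ?thesis
  proof (elim disjE)
    assume "\<sigma> = {}" with m k show ?thesis by (intro zero) simp_all
  next
    assume "\<sigma> = {0}" with m k l show ?thesis by (intro dx) (simp_all only: ldeg2_simps vec2_simps, simp_all)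
  next
    assume "\<sigma> = {1}" with m k l show ?thesis by (intro dy) (simp_all only: ldeg2_simps vec2_simps, simp_all)
  next
    assume "\<sigma> = {0, 1}" with m k l show ?thesis by (intro dxdy) (simp_all only: ldeg2_simps, simp_all)
  qed
qed

lemma monosL2_0: "m \<in> monosL 2 j 0 l \<Longrightarrow> \<exists>a b. a + b = j \<and> m = mono (vec2 a b) {}"
  by (erule monosL2_cases) auto

lemma monosL2_1:
  "m \<in> monosL 2 j 1 l \<Longrightarrow> \<exists>a b. a + b = j \<and>
    (m = mono (vec2 a b) {0} \<and> l \<le> (if b = 1 then 1 else 0) \<or>
     m = mono (vec2 a b) {1} \<and> l \<le> (if a = 1 then 1 else 0))"
  by (erule monosL2_cases) (simp, blast, blast, simp)

lemma monosL2_2: "m \<in> monosL 2 j 2 l \<Longrightarrow> l = 0 \<and> (\<exists>a b. a + b = j \<and> m = mono (vec2 a b) {0, 1})"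
  by (erule monosL2_cases) auto

lemma monosL2_2_linear: "1 \<le> l \<Longrightarrow> monosL 2 j 2 l = {}"
  using monosL2_2 by fastforce

lemma monosL2_ge_3: "3 \<le> k \<Longrightarrow> monosL 2 j k l = {}"
  by (auto elim!: monosL2_elim)

lemma mono2_in_SSminus:
  assumes "a + b \<le> s" "\<sigma> \<subseteq> {..<2}"
  shows "mono (vec2 a b) \<sigma> \<in> SSminus 2 (Suc s) (int (card \<sigma>))"
proof -
  have "mono (vec2 a b) \<sigma> \<in> monosL 2 (a + b) (int (card \<sigma>)) 0"
    by (rule monosL2_intro) (use assms in auto)
  then show ?thesis by (rule monosL_in_SSminus[OF assms(1)])
qed

lemma kappa_mono2_in_SSminus:
  assumes "a + b \<le> s" "\<sigma> \<subseteq> {..<2}"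
  shows "kappa (mono (vec2 a b) \<sigma>) \<in> SSminus 2 (Suc s) (int (card \<sigma>) - 1)"
proof -
  have "mono (vec2 a b) \<sigma> \<in> monosL 2 (a + b) (int (card \<sigma>) - 1 + 1) 0"
    by (rule monosL2_intro) (use assms in auto)
  then show ?thesis by (rule kappa_monosL_in_SSminus[OF assms(1)])
qed

lemma psign2_simps [simp]:
  "psign {0} 0 = 1" "psign {Suc 0} (Suc 0) = 1" "psign {0, Suc 0} 0 = 1" "psign {0, Suc 0} (Suc 0) = -1"
proof -
  have "{i \<in> {0::nat}. i < 0} = {}" "{i \<in> {Suc 0}. i < Suc 0} = {}" "{i \<in> {0::nat, Suc 0}. i < 0} = {}"
    "{i \<in> {0, Suc 0}. i < Suc 0} = {0}"
    by auto
  then show "psign {0} 0 = 1" "psign {Suc 0} (Suc 0) = 1" "psign {0, Suc 0} 0 = 1"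
    "psign {0, Suc 0} (Suc 0) = -1"
    unfolding psign_def by (simp_all only: card.empty card_Suc_eq_finite) simp_all
qed

lemma kappa_mono2 [simp]:
  "kappa_mono (vec2 a b) {} = 0"
  "kappa_mono (vec2 a b) {0} = mono (vec2 (Suc a) b) {}"
  "kappa_mono (vec2 a b) {1} = mono (vec2 a (Suc b)) {}"
  "kappa_mono (vec2 a b) {0, 1} = mono (vec2 (Suc a) b) {1} - mono (vec2 a (Suc b)) {0}"
  "kappa_mono (vec2 a b) {Suc 0} = mono (vec2 a (Suc b)) {}"
  "kappa_mono (vec2 a b) {0, Suc 0} = mono (vec2 (Suc a) b) {Suc 0} - mono (vec2 a (Suc b)) {0}"
proof -
  have "{0::nat, 1} - {0} = {1}" "{0::nat, 1} - {1} = {0}" by auto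
  then show "kappa_mono (vec2 a b) {} = 0" "kappa_mono (vec2 a b) {0} = mono (vec2 (Suc a) b) {}"
    "kappa_mono (vec2 a b) {1} = mono (vec2 a (Suc b)) {}"
    "kappa_mono (vec2 a b) {0, 1} = mono (vec2 (Suc a) b) {1} - mono (vec2 a (Suc b)) {0}"
    "kappa_mono (vec2 a b) {Suc 0} = mono (vec2 a (Suc b)) {}"
    "kappa_mono (vec2 a b) {0, Suc 0} = mono (vec2 (Suc a) b) {Suc 0} - mono (vec2 a (Suc b)) {0}"
    by (simp_all add: kappa_mono_def fun_eq_iff)
qed

lemma d_mono2_empty:
  "d_mono 2 (vec2 a b) {} =
    fscale (real a) (mono (vec2 (a - 1) b) {0}) + fscale (real b) (mono (vec2 a (b - 1)) {1})"
proof -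
  let ?f = "\<lambda>j q. real (vec2 a b j) * psign {} j * mono ((vec2 a b)(j := vec2 a b j - 1)) {j} q"
  have "(\<Sum>j\<in>{j. j < 2 \<and> j \<notin> {} \<and> 0 < vec2 a b j}. ?f j q) = (\<Sum>j\<in>{0, 1}. ?f j q)" for q
    by (rule sum.mono_neutral_left) (auto simp: numeral_2_eq_2 less_Suc_eq)
  then show ?thesis
    by (simp add: d_mono_def psign_def fun_eq_iff fscale_def)
qed

lemma kappa_d_mono2_empty:
  "kappa (d_mono 2 (vec2 a b) {}) = fscale (real (a + b)) (mono (vec2 a b) {})"
proof -
  have "kappa (d_mono 2 (vec2 a b) {}) =
      fscale (real a) (kappa (mono (vec2 (a - 1) b) {0})) +
      fscale (real b) (kappa (mono (vec2 a (b - 1)) {1}))"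
    by (simp only: d_mono2_empty fin_linear_add[OF fin_linear_kappa]
        fin_linear_scale[OF fin_linear_kappa] fin_supp_scale fin_supp_mono)
  also have "\<dots> = fscale (real (a + b)) (mono (vec2 a b) {})"
    by (cases a; cases b) (simp_all add: fun_eq_iff fscale_def algebra_simps)
  finally show ?thesis .
qed

section \<open>Restriction to the square\<close>

lemma eval_form_eq:
  assumes "finite F" "{\<alpha>. \<omega> (\<alpha>, \<sigma>) \<noteq> 0} \<subseteq> F"
  shows "eval_form n \<omega> x \<sigma> = (\<Sum>\<alpha>\<in>F. \<omega> (\<alpha>, \<sigma>) * (\<Prod>i<n. x i ^ \<alpha> i))"
  unfolding eval_form_def by (rule sum.mono_neutral_left) (use assms in auto)

lemma fin_linear_restrict_cube: "fin_linear (restrict_cube n)"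
  unfolding fin_linear_def
proof (intro allI impI)
  fix c a b assume "fin_supp a" "fin_supp b"
  then have F: "finite (fst ` (supp a \<union> supp b))" by (simp add: fin_supp_def)
  have "{\<alpha>. \<omega> (\<alpha>, \<sigma>) \<noteq> 0} \<subseteq> fst ` (supp a \<union> supp b)"
    if "supp \<omega> \<subseteq> supp a \<union> supp b" for \<omega> \<sigma>
    using that by (force simp: supp_def)
  moreover have "supp (fscale c a + b) \<subseteq> supp a \<union> supp b" by (auto simp: supp_def fscale_def)
  ultimately have "{\<alpha>. \<omega> (\<alpha>, \<sigma>) \<noteq> 0} \<subseteq> fst ` (supp a \<union> supp b)"
    if "\<omega> \<in> {a, b, fscale c a + b}" for \<omega> \<sigma>
    using that by blast
  note eval = eval_form_eq[OF F this]
  have "eval_form n (fscale c a + b) x \<sigma> = c * eval_form n a x \<sigma> + eval_form n b x \<sigma>" for x \<sigma>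
    by (simp only: eval[of a] eval[of b] eval[of "fscale c a + b"] insert_iff simp_thms)
      (simp add: fscale_def sum.distrib sum_distrib_left algebra_simps)
  then show "restrict_cube n (fscale c a + b) = fscale c (restrict_cube n a) + restrict_cube n b"
    unfolding restrict_cube_def by (auto simp: fun_eq_iff fscale_def)
qed

lemma eval_form_vec2:
  assumes "{\<alpha>. \<omega> (\<alpha>, \<sigma>) \<noteq> 0} \<subseteq> (\<lambda>(a, b). vec2 a b) ` ({..N} \<times> {..N})"
  shows "eval_form 2 \<omega> (vec2 x y) \<sigma> = (\<Sum>a\<le>N. \<Sum>b\<le>N. \<omega> (vec2 a b, \<sigma>) * x ^ a * y ^ b)"
proof -
  have "eval_form 2 \<omega> (vec2 x y) \<sigma> =
      (\<Sum>\<alpha>\<in>(\<lambda>(a, b). vec2 a b) ` ({..N} \<times> {..N}). \<omega> (\<alpha>, \<sigma>) * (x ^ \<alpha> 0 * y ^ \<alpha> 1))"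
    by (subst eval_form_eq[OF _ assms]) (simp_all add: numeral_2_eq_2)
  also have "\<dots> = (\<Sum>(a, b)\<in>{..N} \<times> {..N}. \<omega> (vec2 a b, \<sigma>) * (x ^ a * y ^ b))"
    by (subst sum.reindex) (auto simp: inj_on_def case_prod_beta)
  finally show ?thesis
    by (simp add: sum.cartesian_product[symmetric] mult.assoc)
qed

lemma supp_two_vars_bounded:
  assumes "fin_supp \<omega>" "in_two_vars \<omega>"
  obtains N where "\<And>\<sigma>. {\<alpha>. \<omega> (\<alpha>, \<sigma>) \<noteq> 0} \<subseteq> (\<lambda>(a, b). vec2 a b) ` ({..N} \<times> {..N})"
proof
  let ?N = "\<Sum>p\<in>supp \<omega>. fst p 0 + fst p 1"
  fix \<sigma>
  show "{\<alpha>. \<omega> (\<alpha>, \<sigma>) \<noteq> 0} \<subseteq> (\<lambda>(a, b). vec2 a b) ` ({..?N} \<times> {..?N})"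
  proof
    fix \<alpha> assume "\<alpha> \<in> {\<alpha>. \<omega> (\<alpha>, \<sigma>) \<noteq> 0}"
    then have p: "(\<alpha>, \<sigma>) \<in> supp \<omega>" by (simp add: supp_def)
    then have "\<alpha> 0 + \<alpha> 1 \<le> ?N"
      using member_le_sum[OF p, of "\<lambda>p. fst p 0 + fst p 1"] assms(1) by (simp add: fin_supp_def)
    moreover have "\<alpha> = vec2 (\<alpha> 0) (\<alpha> 1)"
      using p assms(2) by (intro vec2_eta) (auto simp: in_two_vars_def)
    ultimately show "\<alpha> \<in> (\<lambda>(a, b). vec2 a b) ` ({..?N} \<times> {..?N})"
      by (intro image_eqI[of _ _ "(\<alpha> 0, \<alpha> 1)"]) auto
  qed
qed

lemma polyfun_vanishing_on_Icc:
  assumes "\<And>x::real. -1 \<le> x \<Longrightarrow> x \<le> 1 \<Longrightarrow> (\<Sum>i\<le>N. c i * x ^ i) = 0" "i \<le> N"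
  shows "c i = 0"
proof (rule ccontr)
  assume "c i \<noteq> 0"
  then have "finite {z. (\<Sum>i\<le>N. c i * z ^ i) = 0}"
    using assms(2) by (intro polyfun_rootbound_finite) blast
  moreover have "{-1..1} \<subseteq> {z. (\<Sum>i\<le>N. c i * z ^ i) = 0}" using assms(1) by auto
  ultimately have "finite {-1..(1::real)}" by (rule finite_subset[rotated])
  then show False using infinite_Icc[of "-1::real" 1] by simp
qed

lemma bivariate_polyfun_vanishing_on_square:
  assumes "\<And>x y::real. -1 \<le> x \<Longrightarrow> x \<le> 1 \<Longrightarrow> -1 \<le> y \<Longrightarrow> y \<le> 1 \<Longrightarrow>
      (\<Sum>a\<le>N. \<Sum>b\<le>N. c a b * x ^ a * y ^ b) = 0"
    and "a \<le> N" "b \<le> N"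
  shows "c a b = 0"
proof -
  have "(\<Sum>b\<le>N. c a b * y ^ b) = 0" if "-1 \<le> y" "y \<le> 1" for y :: real
  proof (rule polyfun_vanishing_on_Icc[OF _ assms(2)])
    fix x :: real assume "-1 \<le> x" "x \<le> 1"
    then show "(\<Sum>a\<le>N. (\<Sum>b\<le>N. c a b * y ^ b) * x ^ a) = 0"
      using assms(1)[of x y] that by (simp add: sum_distrib_left sum_distrib_right mult_ac)
  qed
  then show ?thesis by (rule polyfun_vanishing_on_Icc[OF _ assms(3)])
qed

lemma restrict_cube2_eq_zero:
  assumes "fin_supp \<omega>" "in_two_vars \<omega>" "restrict_cube 2 \<omega> = 0"
  shows "\<omega> = 0"
proof -
  obtain N where N: "\<And>\<sigma>. {\<alpha>. \<omega> (\<alpha>, \<sigma>) \<noteq> 0} \<subseteq> (\<lambda>(a, b). vec2 a b) ` ({..N} \<times> {..N})"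
    using supp_two_vars_bounded[OF assms(1,2)] by blast
  have coeff: "\<omega> (vec2 a b, \<sigma>) = 0" if "a \<le> N" "b \<le> N" for a b \<sigma>
  proof (rule bivariate_polyfun_vanishing_on_square[OF _ that])
    fix x y :: real assume "-1 \<le> x" "x \<le> 1" "-1 \<le> y" "y \<le> 1"
    then have "vec2 x y \<in> cube 2" by (auto simp: cube_def vec2_def)
    then have "eval_form 2 \<omega> (vec2 x y) \<sigma> = 0"
      using fun_cong[OF assms(3), of "(vec2 x y, \<sigma>)"] by (simp add: restrict_cube_def)
    then show "(\<Sum>a\<le>N. \<Sum>b\<le>N. \<omega> (vec2 a b, \<sigma>) * x ^ a * y ^ b) = 0"
      by (simp add: eval_form_vec2[OF N])
  qed
  show ?thesis
  proof (rule ext, rule ccontr)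
    fix p :: "(nat \<Rightarrow> nat) \<times> nat set"
    assume "\<omega> p \<noteq> 0 p"
    then have "fst p \<in> {\<alpha>. \<omega> (\<alpha>, snd p) \<noteq> 0}" by simp
    then obtain a b where "a \<le> N" "b \<le> N" "fst p = vec2 a b" using N by fast
    with \<open>\<omega> p \<noteq> 0 p\<close> show False
      using coeff by (metis prod.collapse zero_fun_def)
  qed
qed

lemma fdim_restrict_cube2_span:
  assumes "finite B" "FV.independent B" "\<And>x. x \<in> B \<Longrightarrow> fin_supp x"
    "\<And>x. x \<in> B \<Longrightarrow> in_two_vars x"
  shows "fdim (restrict_cube 2 ` FV.span B) = card B"
  using assms
  by (intro fdim_image_span_eq_card fin_linear_restrict_cube restrict_cube2_eq_zero)
    (auto intro: fin_supp_span in_two_vars_span)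

definition exps_le :: "nat \<Rightarrow> (nat \<times> nat) set" where
  "exps_le s = {(a, b). a + b \<le> s}"

lemma finite_exps_le: "finite (exps_le s)"
  by (rule finite_subset[of _ "{..s} \<times> {..s}"]) (auto simp: exps_le_def)

lemma card_exps_le: "2 * card (exps_le s) = (s + 1) * (s + 2)"
proof (induction s)
  case 0
  have "exps_le 0 = {(0, 0)}" by (auto simp: exps_le_def)
  then show ?case by simp
next
  case (Suc s)
  have "exps_le (Suc s) = exps_le s \<union> (\<lambda>a. (a, Suc s - a)) ` {..Suc s}"
    by (auto simp: exps_le_def image_iff)
  moreover have "exps_le s \<inter> (\<lambda>a. (a, Suc s - a)) ` {..Suc s} = {}"
    by (auto simp: exps_le_def)
  moreover have "card ((\<lambda>a. (a, Suc s - a)) ` {..Suc s}) = Suc (Suc s)"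
    by (subst card_image) (auto simp: inj_on_def)
  ultimately show ?case
    using Suc finite_exps_le[of s] by (simp add: card_Un_disjoint)
qed

definition monos2 :: "nat set \<Rightarrow> nat \<Rightarrow> form set" where
  "monos2 \<sigma> s = (\<lambda>(a, b). mono (vec2 a b) \<sigma>) ` exps_le s"

lemma monos2_iff: "m \<in> monos2 \<sigma> s \<longleftrightarrow> (\<exists>a b. a + b \<le> s \<and> m = mono (vec2 a b) \<sigma>)"
  unfolding monos2_def exps_le_def by auto

lemma mono_in_monos2_iff [simp]: "mono (vec2 a b) \<sigma> \<in> monos2 \<tau> s \<longleftrightarrow> a + b \<le> s \<and> \<sigma> = \<tau>"
  unfolding monos2_iff by auto

lemma finite_monos2: "finite (monos2 \<sigma> s)"
  unfolding monos2_def using finite_exps_le by simp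

lemma card_monos2: "card (monos2 \<sigma> s) = card (exps_le s)"
  unfolding monos2_def by (rule card_image) (auto simp: inj_on_def)

lemma fdim_restrict_cube2_span_monos:
  assumes "finite B" "\<And>x. x \<in> B \<Longrightarrow> \<exists>a b \<sigma>. x = mono (vec2 a b) \<sigma>"
  shows "fdim (restrict_cube 2 ` FV.span B) = card B"
proof (rule fdim_restrict_cube2_span[OF assms(1)])
  show "FV.independent B" using assms(2) by (intro independent_monos) blast
qed (use assms(2) in fastforce)+

section \<open>Two-forms\<close>

lemma SSminus2_2_eq: "SSminus 2 (Suc s) 2 = FV.span (monos2 {0, 1} s)"
proof
  show "SSminus 2 (Suc s) 2 \<subseteq> FV.span (monos2 {0, 1} s)"
  proof (rule SSminus_subset_span)
    fix j assume "j \<le> s"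
    then show "monosL 2 j 2 0 \<subseteq> FV.span (monos2 {0, 1} s)"
      by (auto dest!: monosL2_2 intro: FV.span_base)
  qed (simp_all add: monosL2_2_linear monosL2_ge_3)
  show "FV.span (monos2 {0, 1} s) \<subseteq> SSminus 2 (Suc s) 2"
  proof (rule FV.span_minimal)
    show "monos2 {0, 1} s \<subseteq> SSminus 2 (Suc s) 2"
    proof
      fix m assume "m \<in> monos2 {0, 1} s"
      then obtain a b where "a + b \<le> s" "m = mono (vec2 a b) {0, 1}" by (auto simp: monos2_iff)
      then show "m \<in> SSminus 2 (Suc s) 2" using mono2_in_SSminus[of a b s "{0, 1}"] by simp
    qed
  qed (simp add: SSminus_def)
qed

lemma dof_2: "dof (int (Suc s)) 2 2 = int (card (exps_le s))"
proof -
  have "dof (int (Suc s)) 2 2 = bin (int s + 2) (int s)"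
    by (simp add: dof_def bin_def add.commute)
  also have "\<dots> = int ((s + 2) choose 2)"
    by (simp add: bin_def nat_add_distrib binomial_symmetric[of 2 "s + 2", simplified])
  finally show ?thesis using card_exps_le[of s] by (simp add: choose_two)
qed

lemma dof_eq_fdim_SSminus2_2: "dof (int (Suc s)) 2 2 = int (fdim (restrict_cube 2 ` SSminus 2 (Suc s) 2))"
  unfolding SSminus2_2_eq dof_2
  by (subst fdim_restrict_cube2_span_monos) (auto simp: finite_monos2 monos2_iff card_monos2)

section \<open>Zero-forms\<close>

definition basis0 :: "nat \<Rightarrow> form set" where
  "basis0 s = monos2 {} (Suc s) \<union> {mono (vec2 (Suc s) 1) {}, mono (vec2 1 (Suc s)) {}}"

lemma in_span_basis0:
  "a + b \<le> Suc s \<Longrightarrow> mono (vec2 a b) {} \<in> FV.span (basis0 s)"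
  "fscale c (mono (vec2 (Suc s) 1) {}) \<in> FV.span (basis0 s)"
  "fscale c (mono (vec2 1 (Suc s)) {}) \<in> FV.span (basis0 s)"
  by (intro FV.span_scale FV.span_base, simp add: basis0_def)+

lemma SSminus2_0_subset: "SSminus 2 (Suc s) 0 \<subseteq> FV.span (basis0 s)"
proof (rule SSminus_subset_span)
  fix j assume "j \<le> s"
  then show "monosL 2 j 0 0 \<subseteq> FV.span (basis0 s)"
    by (auto dest!: monosL2_0 intro: in_span_basis0)
next
  fix l :: nat assume "1 \<le> l"
  show "kappa ` monosL 2 (s + l - 1) (0 + 1) l \<subseteq> FV.span (basis0 s)"
    using \<open>1 \<le> l\<close> by (auto dest!: monosL2_1 intro!: in_span_basis0 split: if_splits)
next
  fix l :: nat
  show "(\<lambda>m. ext_d 2 (kappa m)) ` monosL 2 (s + l) 0 l \<subseteq> FV.span (basis0 s)"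
    by (auto dest!: monosL2_0 simp: fin_linear_zero[OF fin_linear_ext_d] FV.span_zero)
next
  fix j assume "j \<le> s"
  then show "kappa ` monosL 2 j (0 + 1) 0 \<subseteq> FV.span (basis0 s)"
    by (auto dest!: monosL2_1 intro!: in_span_basis0)
next
  fix l :: nat assume "1 \<le> l"
  then show "(\<lambda>m. kappa (kappa m)) ` monosL 2 (s + l - 1) (0 + 2) l \<subseteq> FV.span (basis0 s)"
    by (simp add: monosL2_2_linear)
next
  fix l :: nat assume "1 \<le> l"
  then show "(\<lambda>m. kappa (ext_d 2 (kappa m))) ` monosL 2 (s + l) (0 + 1) l \<subseteq> FV.span (basis0 s)"
    by (auto dest!: monosL2_1 simp: kappa_d_mono2_empty in_span_basis0[simplified] split: if_splits)
qed

lemma basis0_subset_SSminus2: "basis0 s \<subseteq> SSminus 2 (Suc s) 0"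
proof -
  let ?V = "SSminus 2 (Suc s) 0"
  have V: "FV.subspace ?V" by (simp add: SSminus_def)
  have low: "mono (vec2 a b) {} \<in> ?V" if le: "a + b \<le> Suc s" for a b
  proof (cases "a + b \<le> s")
    case True
    then show ?thesis using mono2_in_SSminus[of a b s "{}"] by simp
  next
    case False
    with le have top: "a + b = Suc s" by simp
    show ?thesis
    proof (cases a)
      case 0
      with top show ?thesis using kappa_mono2_in_SSminus[of 0 s s "{1}"] by simp
    next
      case (Suc a')
      with top show ?thesis using kappa_mono2_in_SSminus[of a' b s "{0}"] by simp
    qed
  qed
  have "mono (vec2 s 1) {0} \<in> monosL 2 (s + 1) (0 + 1) 1"
    by (rule monosL2_intro) (auto simp: ldeg2_simps)
  note extra1 = kappa_ext_d_kappa_monosL_in_SSminus[OF order_refl this]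
  have "mono (vec2 1 s) {1} \<in> monosL 2 (s + 1) (0 + 1) 1"
    by (rule monosL2_intro) (auto simp: ldeg2_simps)
  note extra2 = kappa_ext_d_kappa_monosL_in_SSminus[OF order_refl this]
  have "mono (vec2 (Suc s) 1) {} \<in> ?V" "mono (vec2 1 (Suc s)) {} \<in> ?V"
    by (rule in_subspace_if_fscale[OF V, of "real (s + 2)"],
        use extra1 extra2 in \<open>simp_all add: kappa_d_mono2_empty\<close>)+
  show ?thesis
    unfolding basis0_def using low \<open>mono (vec2 (Suc s) 1) {} \<in> ?V\<close>
      \<open>mono (vec2 1 (Suc s)) {} \<in> ?V\<close> by (auto simp: monos2_iff)
qed

lemma SSminus2_0_eq: "SSminus 2 (Suc s) 0 = FV.span (basis0 s)"
proof
  show "FV.span (basis0 s) \<subseteq> SSminus 2 (Suc s) 0"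
    by (rule FV.span_minimal[OF basis0_subset_SSminus2]) (simp add: SSminus_def)
qed (rule SSminus2_0_subset)

lemma card_basis0: "card (basis0 s) = card (exps_le (Suc s)) + (if s = 0 then 1 else 2)"
proof -
  have "basis0 s = insert (mono (vec2 (Suc s) 1) {}) (insert (mono (vec2 1 (Suc s)) {}) (monos2 {} (Suc s)))"
    by (auto simp: basis0_def)
  then show ?thesis
    by (simp add: finite_monos2 card_monos2)
qed

lemma dof_0: "2 * dof (int (Suc s)) 0 2 = int ((s + 2) * (s + 3)) + (if s = 0 then 2 else 4)"
proof -
  have "s = 0 \<or> s = 1 \<or> s = 2 \<or> (\<exists>t. s = t + 3)" by presburger
  then consider "s = 0" | "s = 1" | "s = 2" | t where "s = t + 3" by blast
  then show ?thesis
  proof cases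
    case 1
    then show ?thesis by (simp add: dof_def bin_def)
  next
    case 2
    have "{0..1::int} = {0, 1}" by auto
    with 2 show ?thesis by (simp add: dof_def bin_def)
  next
    case 3
    have "{0..1::int} = {0, 1}" by auto
    with 3 show ?thesis by (simp add: dof_def bin_def)
  next
    case 4
    have "min 2 (int (Suc s) div 2) = 2" "{0..2::int} = {0, 1, 2}" "nat (1 + int t) = Suc t"
      using 4 by auto
    moreover have "2 * (Suc t choose 2) = Suc t * t"
      by (induction t) (auto simp: numeral_2_eq_2)
    then have "2 * int (Suc t choose 2) = int (Suc t) * int t"
      by (metis of_nat_mult of_nat_numeral)
    ultimately show ?thesis
      using 4 by (simp add: dof_def bin_def algebra_simps)
  qed
qed

lemma dof_eq_fdim_SSminus2_0: "dof (int (Suc s)) 0 2 = int (fdim (restrict_cube 2 ` SSminus 2 (Suc s) 0))"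
proof -
  have "fdim (restrict_cube 2 ` SSminus 2 (Suc s) 0) = card (basis0 s)"
    unfolding SSminus2_0_eq
    by (rule fdim_restrict_cube2_span_monos) (auto simp: basis0_def finite_monos2 monos2_iff)
  moreover have "2 * card (exps_le (Suc s)) = (s + 2) * (s + 3)"
    using card_exps_le[of "Suc s"] by (simp add: algebra_simps)
  then have "2 * int (card (exps_le (Suc s))) = int ((s + 2) * (s + 3))"
    by (metis of_nat_mult of_nat_numeral)
  ultimately show ?thesis
    using dof_0[of s] card_basis0[of s] by (cases "s = 0") simp_all
qed

section \<open>One-forms\<close>

definition koszul2 :: "nat \<Rightarrow> nat \<Rightarrow> form" where
  "koszul2 s a = mono (vec2 (Suc a) (s - a)) {1} - mono (vec2 a (Suc s - a)) {0}"

lemma kappa_mono2_top: "a \<le> s \<Longrightarrow> kappa (mono (vec2 a (s - a)) {0, 1}) = koszul2 s a"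
  by (simp add: koszul2_def Suc_diff_le)

definition basis1_monos :: "nat \<Rightarrow> form set" where
  "basis1_monos s = monos2 {0} s \<union> monos2 {1} s \<union>
     {mono (vec2 (Suc s) 0) {1}, mono (vec2 0 (Suc s)) {0}, mono (vec2 1 s) {1}, mono (vec2 s 1) {0}}"

definition basis1 :: "nat \<Rightarrow> form set" where
  "basis1 s = basis1_monos s \<union> koszul2 s ` {1..<s}"

lemma in_span_basis1:
  "a + b \<le> s \<Longrightarrow> mono (vec2 a b) {0} \<in> FV.span (basis1 s)"
  "a + b \<le> s \<Longrightarrow> mono (vec2 a b) {1} \<in> FV.span (basis1 s)"
  "mono (vec2 (Suc s) 0) {1} \<in> FV.span (basis1 s)" "mono (vec2 0 (Suc s)) {0} \<in> FV.span (basis1 s)"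
  "mono (vec2 1 s) {1} \<in> FV.span (basis1 s)" "mono (vec2 s 1) {0} \<in> FV.span (basis1 s)"
  "1 \<le> a \<Longrightarrow> a < s \<Longrightarrow> koszul2 s a \<in> FV.span (basis1 s)"
  by (auto simp: basis1_def basis1_monos_def intro: FV.span_base)

lemma kappa_2form_in_span_basis1:
  assumes "a + b \<le> s"
  shows "kappa (mono (vec2 a b) {0, 1}) \<in> FV.span (basis1 s)"
proof -
  have k: "kappa (mono (vec2 a b) {0, 1}) = mono (vec2 (Suc a) b) {1} - mono (vec2 a (Suc b)) {0}"
    by simp
  consider "a + b < s" | "a + b = s" "a = 0" | "a + b = s" "a = s" | "a + b = s" "1 \<le> a" "a < s"
    using assms by linarith
  then show ?thesis
  proof cases
    case 1
    then show ?thesis unfolding k by (intro FV.span_diff in_span_basis1) auto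
  next
    case 2
    then show ?thesis unfolding k by (intro FV.span_diff) (simp_all add: in_span_basis1[simplified])
  next
    case 3
    then show ?thesis unfolding k by (intro FV.span_diff) (simp_all add: in_span_basis1[simplified])
  next
    case 4
    then have "b = s - a" by simp
    then have "mono (vec2 (Suc a) b) {1} - mono (vec2 a (Suc b)) {0} = koszul2 s a"
      using 4 by (simp add: koszul2_def Suc_diff_le)
    with 4 show ?thesis unfolding k by (simp add: in_span_basis1)
  qed
qed

lemma SSminus2_1_subset: "SSminus 2 (Suc s) 1 \<subseteq> FV.span (basis1 s)"
proof (rule SSminus_subset_span)
  fix j assume "j \<le> s"
  then show "monosL 2 j 1 0 \<subseteq> FV.span (basis1 s)"
    by (auto dest!: monosL2_1 intro: in_span_basis1)
next
  fix l :: nat assume "1 \<le> l"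
  then show "kappa ` monosL 2 (s + l - 1) (1 + 1) l \<subseteq> FV.span (basis1 s)"
    by (simp add: monosL2_2_linear)
next
  fix l :: nat assume "1 \<le> l"
  have "ext_d 2 (kappa m) \<in> FV.span (basis1 s)" if "m \<in> monosL 2 (s + l) 1 l" for m
    using monosL2_1[OF that] \<open>1 \<le> l\<close>
    by (auto simp: d_mono2_empty in_span_basis1[simplified] FV.span_add FV.span_scale
        split: if_splits)
  then show "(\<lambda>m. ext_d 2 (kappa m)) ` monosL 2 (s + l) 1 l \<subseteq> FV.span (basis1 s)" by blast
next
  fix j assume "j \<le> s"
  then show "kappa ` monosL 2 j (1 + 1) 0 \<subseteq> FV.span (basis1 s)"
    by (auto dest!: monosL2_2 intro!: kappa_2form_in_span_basis1 simp del: kappa_mono)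
next
  fix l :: nat assume "1 \<le> l"
  then show "(\<lambda>m. kappa (kappa m)) ` monosL 2 (s + l - 1) (1 + 2) l \<subseteq> FV.span (basis1 s)"
    by (simp add: monosL2_ge_3)
next
  fix l :: nat assume "1 \<le> l"
  then show "(\<lambda>m. kappa (ext_d 2 (kappa m))) ` monosL 2 (s + l) (1 + 1) l \<subseteq> FV.span (basis1 s)"
    by (simp add: monosL2_2_linear)
qed

lemma basis1_subset_SSminus2: "basis1 s \<subseteq> SSminus 2 (Suc s) 1"
proof -
  let ?V = "SSminus 2 (Suc s) 1"
  have V: "FV.subspace ?V" by (simp add: SSminus_def)
  have low: "mono (vec2 a b) \<sigma> \<in> ?V" if "a + b \<le> s" "\<sigma> = {0} \<or> \<sigma> = {1}" for a b \<sigma>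
    using mono2_in_SSminus[OF that(1), of \<sigma>] that(2) by auto
  have K: "koszul2 s a \<in> ?V" if "a \<le> s" for a
    using kappa_mono2_in_SSminus[of a "s - a" s "{0, 1}"] kappa_mono2_top[OF that] that by simp
  have "mono (vec2 s 1) {0} \<in> monosL 2 (s + 1) 1 1" "mono (vec2 1 s) {1} \<in> monosL 2 (s + 1) 1 1"
    by (rule monosL2_intro; simp add: ldeg2_simps)+
  then have D: "ext_d 2 (kappa (mono (vec2 s 1) {0})) \<in> ?V" "ext_d 2 (kappa (mono (vec2 1 s) {1})) \<in> ?V"
    by (simp_all only: ext_d_kappa_monosL_in_SSminus[OF order_refl])
  txt \<open>Solve the \<open>2 \<times> 2\<close> systems formed by \<open>d\<kappa>\<close> of a linear-degree-one monomial and
    an outermost Koszul image.\<close>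
  have "fscale (real (s + 2)) (mono (vec2 s 1) {0}) = ext_d 2 (kappa (mono (vec2 s 1) {0})) - koszul2 s s"
    "fscale (real (s + 2)) (mono (vec2 1 s) {1}) = ext_d 2 (kappa (mono (vec2 1 s) {1})) + koszul2 s 0"
    by (simp_all add: d_mono2_empty koszul2_def fun_eq_iff fscale_def algebra_simps)
  then have "fscale (real (s + 2)) (mono (vec2 s 1) {0}) \<in> ?V"
    "fscale (real (s + 2)) (mono (vec2 1 s) {1}) \<in> ?V"
    using D K[of s] K[of 0] by (simp_all add: FV.subspace_diff[OF V] FV.subspace_add[OF V])
  then have P: "mono (vec2 s 1) {0} \<in> ?V" and R: "mono (vec2 1 s) {1} \<in> ?V"
    using in_subspace_if_fscale[OF V, of "real (s + 2)"] by simp_all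
  have "mono (vec2 (Suc s) 0) {1} = koszul2 s s + mono (vec2 s 1) {0}"
    "mono (vec2 0 (Suc s)) {0} = mono (vec2 1 s) {1} - koszul2 s 0"
    by (simp_all add: koszul2_def fun_eq_iff)
  then have "mono (vec2 (Suc s) 0) {1} \<in> ?V" "mono (vec2 0 (Suc s)) {0} \<in> ?V"
    using P R K[of s] K[of 0] by (simp_all add: FV.subspace_add[OF V] FV.subspace_diff[OF V])
  with low P R K show ?thesis
    by (auto simp: basis1_def basis1_monos_def monos2_iff)
qed

lemma SSminus2_1_eq: "SSminus 2 (Suc s) 1 = FV.span (basis1 s)"
proof
  show "FV.span (basis1 s) \<subseteq> SSminus 2 (Suc s) 1"
    by (rule FV.span_minimal[OF basis1_subset_SSminus2]) (simp add: SSminus_def)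
qed (rule SSminus2_1_subset)

lemma koszul2_apply:
  "koszul2 s a p =
    (if p = (vec2 (Suc a) (s - a), {1}) then 1 else if p = (vec2 a (Suc s - a), {0}) then -1 else 0)"
  by (auto simp: koszul2_def mono_apply)

lemma koszul2_vanishes_on_basis1_monos:
  assumes "mono \<alpha> \<sigma> \<in> basis1_monos s" "1 \<le> a" "a < s"
  shows "koszul2 s a (\<alpha>, \<sigma>) = 0"
  using assms by (auto simp: basis1_monos_def monos2_iff koszul2_apply)

lemma basis1_monos_monomial: "m \<in> basis1_monos s \<Longrightarrow> \<exists>\<alpha> \<sigma>. m = mono \<alpha> \<sigma>"
  by (auto simp: basis1_monos_def monos2_iff)

lemma koszul2_notin_basis1_monos:
  assumes "1 \<le> a" "a < s"
  shows "koszul2 s a \<notin> basis1_monos s"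
proof
  assume K: "koszul2 s a \<in> basis1_monos s"
  then obtain \<alpha> \<sigma> where k: "koszul2 s a = mono \<alpha> \<sigma>" using basis1_monos_monomial by blast
  then have "koszul2 s a (\<alpha>, \<sigma>) = 1" by (simp add: mono_apply)
  moreover have "koszul2 s a (\<alpha>, \<sigma>) = 0"
    using koszul2_vanishes_on_basis1_monos[of \<alpha> \<sigma> s a] K k assms by simp
  ultimately show False by simp
qed

lemma inj_koszul2: "inj (koszul2 s)"
proof (rule injI)
  fix a a' assume eq: "koszul2 s a = koszul2 s a'"
  show "a = a'"
  proof (rule ccontr)
    assume "a \<noteq> a'"
    then have "koszul2 s a' (vec2 (Suc a) (s - a), {1}) = 0" by (simp add: koszul2_apply)
    moreover have "koszul2 s a (vec2 (Suc a) (s - a), {1}) = 1" by (simp add: koszul2_apply)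
    ultimately show False using eq by simp
  qed
qed

lemma basis1_vanishes_at_mono:
  assumes "mono \<alpha> \<sigma> \<in> basis1_monos s" "f \<in> basis1 s" "f \<noteq> mono \<alpha> \<sigma>"
  shows "f (\<alpha>, \<sigma>) = 0"
proof (cases "f \<in> basis1_monos s")
  case True
  then obtain \<beta> \<tau> where f: "f = mono \<beta> \<tau>" using basis1_monos_monomial by blast
  with assms(3) have "(\<alpha>, \<sigma>) \<noteq> (\<beta>, \<tau>)" by auto
  with f show ?thesis by (simp add: mono_apply)
next
  case False
  with assms(2) have "f \<in> koszul2 s ` {1..<s}" by (simp add: basis1_def)
  then obtain a where "1 \<le> a" "a < s" "f = koszul2 s a" by auto
  with koszul2_vanishes_on_basis1_monos[OF assms(1)] show ?thesis by simp
qed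

lemma basis1_vanishes_at_koszul2:
  assumes "1 \<le> a" "a < s" "f \<in> basis1 s" "f \<noteq> koszul2 s a"
  shows "f (vec2 (Suc a) (s - a), {1}) = 0"
proof (cases "f \<in> basis1_monos s")
  case True
  then obtain \<beta> \<tau> where f: "f = mono \<beta> \<tau>" using basis1_monos_monomial by blast
  from koszul2_vanishes_on_basis1_monos[OF True[unfolded f] assms(1,2)]
  have "(\<beta>, \<tau>) \<noteq> (vec2 (Suc a) (s - a), {1})" by (simp add: koszul2_apply split: if_splits)
  with f show ?thesis by (auto simp: mono_apply)
next
  case False
  with assms(3) have "f \<in> koszul2 s ` {1..<s}" by (simp add: basis1_def)
  then obtain a' where a': "f = koszul2 s a'" by auto
  with assms(4) have "a' \<noteq> a" by auto
  with a' show ?thesis by (simp add: koszul2_apply)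
qed

lemma independent_basis1: "FV.independent (basis1 s)"
proof (rule independent_if_private_coefficients)
  fix e assume "e \<in> basis1 s"
  then consider (mono) \<alpha> \<sigma> where "mono \<alpha> \<sigma> \<in> basis1_monos s" "e = mono \<alpha> \<sigma>"
    | (koszul) a where "1 \<le> a" "a < s" "e = koszul2 s a"
    using basis1_monos_monomial[of _ s] unfolding basis1_def by fastforce
  then show "\<exists>p. e p \<noteq> 0 \<and> (\<forall>f\<in>basis1 s. f \<noteq> e \<longrightarrow> f p = 0)"
  proof cases
    case mono
    have "\<forall>f\<in>basis1 s. f \<noteq> e \<longrightarrow> f (\<alpha>, \<sigma>) = 0"
      using basis1_vanishes_at_mono[OF mono(1)] mono(2) by blast
    moreover have "e (\<alpha>, \<sigma>) \<noteq> 0" using mono(2) by (simp add: mono_apply)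
    ultimately show ?thesis by blast
  next
    case koszul
    have "\<forall>f\<in>basis1 s. f \<noteq> e \<longrightarrow> f (vec2 (Suc a) (s - a), {1}) = 0"
      using basis1_vanishes_at_koszul2[OF koszul(1,2)] koszul(3) by blast
    moreover have "e (vec2 (Suc a) (s - a), {1}) \<noteq> 0" using koszul(3) by (simp add: koszul2_apply)
    ultimately show ?thesis by blast
  qed
qed

lemma card_basis1: "card (basis1 s) = 2 * card (exps_le s) + (if s = 0 then 2 else s + 3)"
proof -
  have "monos2 {0} s \<inter> monos2 {1} s = {}" by (auto simp: monos2_iff)
  then have M: "card (monos2 {0} s \<union> monos2 {1} s) = 2 * card (exps_le s)"
    by (simp add: card_Un_disjoint finite_monos2 card_monos2)
  have "card (basis1_monos s) = 2 * card (exps_le s) + (if s = 0 then 2 else 4)"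
  proof (cases s)
    case 0
    then have "basis1_monos s =
        insert (mono (vec2 1 0) {1}) (insert (mono (vec2 0 1) {0}) (monos2 {0} 0 \<union> monos2 {1} 0))"
      by (auto simp: basis1_monos_def)
    then show ?thesis using 0 M by (simp add: finite_monos2)
  next
    case (Suc t)
    have "basis1_monos s = insert (mono (vec2 (Suc s) 0) {1}) (insert (mono (vec2 0 (Suc s)) {0})
        (insert (mono (vec2 1 s) {1}) (insert (mono (vec2 s 1) {0}) (monos2 {0} s \<union> monos2 {1} s))))"
      by (simp add: basis1_monos_def insert_commute)
    then show ?thesis using Suc M by (simp add: finite_monos2)
  qed
  moreover have "basis1_monos s \<inter> koszul2 s ` {1..<s} = {}"
    using koszul2_notin_basis1_monos by auto
  moreover have "card (koszul2 s ` {1..<s}) = s - 1"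
    using card_image[OF inj_on_subset[OF inj_koszul2]] by simp
  moreover have "finite (basis1_monos s)" by (simp add: basis1_monos_def finite_monos2)
  ultimately show ?thesis
    unfolding basis1_def by (simp add: card_Un_disjoint)
qed

lemma dof_1: "dof (int (Suc s)) 1 2 = int ((s + 1) * (s + 2)) + (if s = 0 then 2 else int s + 3)"
proof (cases s)
  case 0
  then show ?thesis by (simp add: dof_def bin_def)
next
  case (Suc t)
  have "min 2 (int (Suc s) div 2 + 1) = 2" "{1..2::int} = {1, 2}"
    "nat (1 + int t) = Suc t" "nat (int t + 2) = Suc (Suc t)"
    using Suc by auto
  moreover have "Suc (Suc t) choose Suc t = Suc (Suc t)" by (rule binomial_Suc_n)
  ultimately show ?thesis
    using Suc by (simp add: dof_def bin_def algebra_simps)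
qed

lemma dof_eq_fdim_SSminus2_1: "dof (int (Suc s)) 1 2 = int (fdim (restrict_cube 2 ` SSminus 2 (Suc s) 1))"
proof -
  have "fdim (restrict_cube 2 ` SSminus 2 (Suc s) 1) = card (basis1 s)"
    unfolding SSminus2_1_eq
  proof (rule fdim_restrict_cube2_span[OF _ independent_basis1])
    show "finite (basis1 s)" by (simp add: basis1_def basis1_monos_def finite_monos2)
  qed (auto simp: basis1_def basis1_monos_def monos2_iff koszul2_def
      intro: fin_supp_diff in_two_vars_diff)
  then show ?thesis
    using dof_1[of s] card_basis1[of s] card_exps_le[of s] by simp
qed

theorem mainTheorem10:
  fixes r :: nat and k :: nat
  assumes "1 \<le> r" and "k \<le> 2"
  shows "dof (int r) (int k) 2 = int (fdim (restrict_cube 2 ` SSminus 2 r (int k)))"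
proof -
  obtain s where "r = Suc s" using assms(1) by (cases r) auto
  moreover have "k = 0 \<or> k = 1 \<or> k = 2" using assms(2) by auto
  ultimately show ?thesis
    using dof_eq_fdim_SSminus2_0[of s] dof_eq_fdim_SSminus2_1[of s] dof_eq_fdim_SSminus2_2[of s]
    by auto
qed

end
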